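(* Let $\mathbb{T}$ be a time scale, $t_1<t_2$ with $t_1,t_2\in\mathbb{T}$, $(\Omega,\mathcal{F},\mathbb{P})$ a probability space, and $\{W_t\}_{t\in\mathbb{T}}$ a Brownian motion on $\mathbb{T}$. Let $f(t,\omega)$ be an $L^2([t_1,t_2]_{\mathbb{T}})$-progressively measurable random function on $\mathbb{T}$ such that $\mathbb{E}f^2(t,\omega)$ is uniformly bounded on $[t_1,t_2]$. For each $n$ let $\pi^{(n)}: t_1=s_0<s_1<\dots<s_n=t_2$ be a partition with $s_0,\dots,s_n\in\mathbb{T}$ and $\max_{i=1,\dots,n}(\rho(s_i)-s_{i-1})<2^{-n}$. Say that the interval $(s_{i-1},s_i)$ is of class (a) if $(s_{i-1},s_i)\cap I=\emptyset$ for every $I\in\mathcal{I}$. Then $$\mathbb{P}\Big(\lim_{n\to\infty}\Big[\sum_{(a)}f(s_{i-1},\omega)(W_{s_i}-W_{s_{i-1}})^2-\sum_{(a)}f(s_{i-1},\omega)(s_i-s_{i-1})\Big]=0\Big)=1,$$ where $\sum_{(a)}$ denotes the sum over those $i\in\{1,\dots,n\}$ for which $(s_{i-1},s_i)$ is of class (a).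
   Context: A time scale $\mathbb{T}$ is a nonempty closed subset of $\mathbb{R}$; $[a,b]_{\mathbb{T}}=[a,b]\cap\mathbb{T}$; $\sigma(t)=\inf\{s\in\mathbb{T}:s>t\}$, $\rho(t)=\sup\{s\in\mathbb{T}:s<t\}$. A Brownian motion indexed by $\mathbb{T}$ is an adapted process $\{W_t\}$ on a filtered probability space with $W_0=0$ a.s., such that for $s<t$ in $\mathbb{T}$ the increment $W_t-W_s$ is independent of $\mathcal{F}_s$ and is $N(0,t-s)$, and $W$ is a.s. continuous on $\mathbb{T}$. $\mathcal{I}$ denotes the collection of open intervals $(a,b)$ with $a<b$, $a,b\in\mathbb{T}$ and $(a,b)\cap\mathbb{T}=\emptyset$ (i.e. $b=\sigma(a)>a$). *)

theory Defs
  imports "HOL-Probability.Probability"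
begin

definition time_scale :: "real set \<Rightarrow> bool" where
  "time_scale T \<longleftrightarrow> T \<noteq> {} \<and> closed T"

definition sigma_ts :: "real set \<Rightarrow> real \<Rightarrow> real" where
  "sigma_ts T t = (if \<exists>s\<in>T. s > t then Inf {s\<in>T. s > t} else t)"

definition rho_ts :: "real set \<Rightarrow> real \<Rightarrow> real" where
  "rho_ts T t = (if \<exists>s\<in>T. s < t then Sup {s\<in>T. s < t} else t)"

text \<open>The collection of gap intervals (a, sigma(a)) of T.\<close>
definition gap_intervals :: "real set \<Rightarrow> real set set" where
  "gap_intervals T = {{a<..<b} | a b. a \<in> T \<and> b \<in> T \<and> a < b \<and> {a<..<b} \<inter> T = {}}"

definition filtration_on :: "real set \<Rightarrow> 'a measure \<Rightarrow> (real \<Rightarrow> 'a measure) \<Rightarrow> bool" where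
  "filtration_on T M F \<longleftrightarrow>
     (\<forall>t\<in>T. space (F t) = space M \<and> sets (F t) \<subseteq> sets M) \<and>
     (\<forall>s\<in>T. \<forall>t\<in>T. s \<le> t \<longrightarrow> sets (F s) \<subseteq> sets (F t))"

definition brownian_motion_on ::
    "real set \<Rightarrow> 'a measure \<Rightarrow> (real \<Rightarrow> 'a measure) \<Rightarrow> (real \<Rightarrow> 'a \<Rightarrow> real) \<Rightarrow> bool" where
  "brownian_motion_on T M F W \<longleftrightarrow>
     prob_space M \<and> filtration_on T M F \<and>
     (\<forall>t\<in>T. W t \<in> borel_measurable (F t)) \<and>
     (0 \<in> T \<longrightarrow> (AE \<omega> in M. W 0 \<omega> = 0)) \<and>
     (\<forall>s\<in>T. \<forall>t\<in>T. s < t \<longrightarrow>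
        (\<forall>A\<in>sets (F s). \<forall>B\<in>sets borel.
           measure M (A \<inter> {\<omega>\<in>space M. W t \<omega> - W s \<omega> \<in> B})
             = measure M A * measure M {\<omega>\<in>space M. W t \<omega> - W s \<omega> \<in> B}) \<and>
        distributed M lborel (\<lambda>\<omega>. W t \<omega> - W s \<omega>) (normal_density 0 (sqrt (t - s)))) \<and>
     (AE \<omega> in M. continuous_on T (\<lambda>t. W t \<omega>))"

definition prog_measurable_on ::
    "real set \<Rightarrow> real \<Rightarrow> real \<Rightarrow> (real \<Rightarrow> 'a measure) \<Rightarrow> (real \<Rightarrow> 'a \<Rightarrow> real) \<Rightarrow> bool" where
  "prog_measurable_on T t1 t2 F f \<longleftrightarrow>
     (\<forall>t\<in>{t1..t2} \<inter> T.
        (\<lambda>(s, \<omega>). f s \<omega>) \<in> borel_measurable (restrict_space borel ({t1..t} \<inter> T) \<Otimes>\<^sub>M F t))"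

end

theory Submission
  imports Defs
begin

(*
  Write xi_i = (W(s_i) - W(s_{i-1}))^2 - (s_i - s_{i-1}), so that the n-th difference is
  Y_n = sum_(a) f(s_{i-1}) xi_i.  Since xi_j is independent of F(s_{j-1}) with mean 0 and
  variance 2 (s_j - s_{j-1})^2, the summands are orthogonal in L^2 and
  E Y_n^2 = sum_(a) 2 (s_i - s_{i-1})^2 E f(s_{i-1})^2.
  An interval of class (a) has s_i <= rho(s_i), for otherwise (rho(s_i), s_i) would be a gap
  of T meeting it; hence its length is below 2^-n and E Y_n^2 <= 2 C (t_2 - t_1) 2^-n.  These
  second moments are summable, so sum_n Y_n^2 < oo almost surely and Y_n -> 0 almost surely.
*)

lemma lift_Suc_mono_le_upto:
  fixes s :: "nat \<Rightarrow> 'b::order"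
  assumes "\<And>k. k < N \<Longrightarrow> s k < s (Suc k)" and "i \<le> j" "j \<le> N"
  shows "s i \<le> s j"
  using assms by (intro lift_Suc_mono_le_ivl[of "{..<N}" s i j]) (auto intro: less_imp_le)

lemma integrable_mult_of_square_integrable:
  fixes a b :: "'a \<Rightarrow> real"
  assumes "a \<in> borel_measurable M" "b \<in> borel_measurable M"
    and "integrable M (\<lambda>x. (a x)\<^sup>2)" "integrable M (\<lambda>x. (b x)\<^sup>2)"
  shows "integrable M (\<lambda>x. a x * b x)"
proof (rule Bochner_Integration.integrable_bound[of _ "\<lambda>x. (a x)\<^sup>2 + (b x)\<^sup>2"])
  show "integrable M (\<lambda>x. (a x)\<^sup>2 + (b x)\<^sup>2)" using assms by simp
  show "(\<lambda>x. a x * b x) \<in> borel_measurable M" using assms by measurable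
  show "AE x in M. norm (a x * b x) \<le> norm ((a x)\<^sup>2 + (b x)\<^sup>2)"
  proof (rule AE_I2)
    fix x
    have "2 * \<bar>a x\<bar> * \<bar>b x\<bar> \<le> (a x)\<^sup>2 + (b x)\<^sup>2"
      using sum_squares_bound[of "\<bar>a x\<bar>" "\<bar>b x\<bar>"] by simp
    moreover have "0 \<le> \<bar>a x\<bar> * \<bar>b x\<bar>" by simp
    ultimately have "\<bar>a x\<bar> * \<bar>b x\<bar> \<le> (a x)\<^sup>2 + (b x)\<^sup>2" by linarith
    then show "norm (a x * b x) \<le> norm ((a x)\<^sup>2 + (b x)\<^sup>2)"
      by (simp add: abs_mult)
  qed
qed

lemma AE_tendsto_zero_of_summable_square_integrals:
  fixes Y :: "nat \<Rightarrow> 'a \<Rightarrow> real"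
  assumes sq: "\<And>n. integrable M (\<lambda>\<omega>. (Y n \<omega>)\<^sup>2)"
    and summable: "summable (\<lambda>n. \<integral>\<omega>. (Y n \<omega>)\<^sup>2 \<partial>M)"
  shows "AE \<omega> in M. (\<lambda>n. Y n \<omega>) \<longlonglongrightarrow> 0"
proof -
  have [measurable]: "(\<lambda>\<omega>. (Y n \<omega>)\<^sup>2) \<in> borel_measurable M" for n
    using sq by (rule borel_measurable_integrable)
  have "(\<integral>\<^sup>+\<omega>. (\<Sum>n. ennreal ((Y n \<omega>)\<^sup>2)) \<partial>M) = (\<Sum>n. \<integral>\<^sup>+\<omega>. ennreal ((Y n \<omega>)\<^sup>2) \<partial>M)"
    by (intro nn_integral_suminf) measurable
  also have "\<dots> = (\<Sum>n. ennreal (\<integral>\<omega>. (Y n \<omega>)\<^sup>2 \<partial>M))"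
    by (intro suminf_cong nn_integral_eq_integral sq) simp
  also have "\<dots> = ennreal (\<Sum>n. \<integral>\<omega>. (Y n \<omega>)\<^sup>2 \<partial>M)"
    using summable by (intro suminf_ennreal2 integral_nonneg_AE) simp_all
  finally have "(\<integral>\<^sup>+\<omega>. (\<Sum>n. ennreal ((Y n \<omega>)\<^sup>2)) \<partial>M) \<noteq> \<infinity>"
    by simp
  then have "AE \<omega> in M. (\<Sum>n. ennreal ((Y n \<omega>)\<^sup>2)) \<noteq> \<infinity>"
    by (intro nn_integral_PInf_AE) measurable
  then show ?thesis
  proof (rule AE_mp, intro AE_I2 impI)
    fix \<omega> assume "(\<Sum>n. ennreal ((Y n \<omega>)\<^sup>2)) \<noteq> \<infinity>"
    then have "summable (\<lambda>n. (Y n \<omega>)\<^sup>2)"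
      using summable_suminf_not_top[of "\<lambda>n. (Y n \<omega>)\<^sup>2"] by simp
    then have "(\<lambda>n. sqrt ((Y n \<omega>)\<^sup>2)) \<longlonglongrightarrow> sqrt 0"
      by (rule tendsto_real_sqrt[OF summable_LIMSEQ_zero])
    then have "(\<lambda>n. \<bar>Y n \<omega>\<bar>) \<longlonglongrightarrow> 0"
      by simp
    then show "(\<lambda>n. Y n \<omega>) \<longlonglongrightarrow> 0"
      by (rule tendsto_rabs_zero_cancel)
  qed
qed

lemma integral_square_sum_orthogonal:
  fixes Z :: "'i::linorder \<Rightarrow> 'a \<Rightarrow> real"
  assumes A: "finite A"
    and meas: "\<And>i. i \<in> A \<Longrightarrow> Z i \<in> borel_measurable M"
    and sq: "\<And>i. i \<in> A \<Longrightarrow> integrable M (\<lambda>\<omega>. (Z i \<omega>)\<^sup>2)"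
    and orth: "\<And>i j. i \<in> A \<Longrightarrow> j \<in> A \<Longrightarrow> i < j \<Longrightarrow> (\<integral>\<omega>. Z i \<omega> * Z j \<omega> \<partial>M) = 0"
  shows "integrable M (\<lambda>\<omega>. (\<Sum>i\<in>A. Z i \<omega>)\<^sup>2)"
    and "(\<integral>\<omega>. (\<Sum>i\<in>A. Z i \<omega>)\<^sup>2 \<partial>M) = (\<Sum>i\<in>A. \<integral>\<omega>. (Z i \<omega>)\<^sup>2 \<partial>M)"
proof -
  have prod: "integrable M (\<lambda>\<omega>. Z i \<omega> * Z j \<omega>)" if "i \<in> A" "j \<in> A" for i j
    using that by (intro integrable_mult_of_square_integrable meas sq)
  have cross: "(\<integral>\<omega>. Z i \<omega> * Z j \<omega> \<partial>M) = (if i = j then \<integral>\<omega>. (Z i \<omega>)\<^sup>2 \<partial>M else 0)"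
    if "i \<in> A" "j \<in> A" for i j
  proof (cases i j rule: linorder_cases)
    case greater
    then have "(\<integral>\<omega>. Z j \<omega> * Z i \<omega> \<partial>M) = 0"
      using orth that by blast
    then show ?thesis
      using greater by (simp only: mult.commute[of "Z i _"]) simp
  qed (use orth that in \<open>simp_all add: power2_eq_square\<close>)
  have square: "(\<lambda>\<omega>. (\<Sum>i\<in>A. Z i \<omega>)\<^sup>2) = (\<lambda>\<omega>. \<Sum>i\<in>A. \<Sum>j\<in>A. Z i \<omega> * Z j \<omega>)"
    by (simp add: power2_eq_square sum_product)
  show "integrable M (\<lambda>\<omega>. (\<Sum>i\<in>A. Z i \<omega>)\<^sup>2)"
    unfolding square using prod by (intro Bochner_Integration.integrable_sum) blast
  have "(\<integral>\<omega>. (\<Sum>i\<in>A. Z i \<omega>)\<^sup>2 \<partial>M) = (\<Sum>i\<in>A. \<Sum>j\<in>A. \<integral>\<omega>. Z i \<omega> * Z j \<omega> \<partial>M)"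
    unfolding square using prod
    by (simp add: Bochner_Integration.integral_sum Bochner_Integration.integrable_sum)
  also have "\<dots> = (\<Sum>i\<in>A. \<integral>\<omega>. (Z i \<omega>)\<^sup>2 \<partial>M)"
    using A by (simp add: cross cong: sum.cong)
  finally show "(\<integral>\<omega>. (\<Sum>i\<in>A. Z i \<omega>)\<^sup>2 \<partial>M) = (\<Sum>i\<in>A. \<integral>\<omega>. (Z i \<omega>)\<^sup>2 \<partial>M)" .
qed

lemma indep_var_of_indep_subalgebra:
  fixes D g :: "'a \<Rightarrow> real" and h :: "real \<Rightarrow> real"
  assumes "prob_space M" and sub: "subalgebra M G"
    and D: "D \<in> borel_measurable M"
    and ind: "\<forall>A\<in>sets G. \<forall>B\<in>sets borel.
      measure M (A \<inter> {\<omega>\<in>space M. D \<omega> \<in> B}) = measure M A * measure M {\<omega>\<in>space M. D \<omega> \<in> B}"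
    and g: "g \<in> borel_measurable G" and h: "h \<in> borel_measurable borel"
  shows "prob_space.indep_var M borel g borel (\<lambda>\<omega>. h (D \<omega>))"
proof -
  interpret prob_space M by fact
  have space: "space G = space M" and sets: "sets G \<subseteq> sets M"
    using sub unfolding subalgebra_def by auto
  let ?\<sigma>g = "sigma_sets (space M) {g -` A \<inter> space M | A. A \<in> sets borel}"
  let ?\<sigma>hD = "sigma_sets (space M) {(\<lambda>\<omega>. h (D \<omega>)) -` A \<inter> space M | A. A \<in> sets borel}"
  have \<sigma>g: "?\<sigma>g \<subseteq> sets G"
    using sets.sigma_sets_subset[of "{g -` A \<inter> space M | A. A \<in> sets borel}" G] g space
    by (auto simp: measurable_def)
  have \<sigma>hD: "?\<sigma>hD \<subseteq> {D -` B \<inter> space M | B. B \<in> sets borel}"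
  proof -
    let ?V = "vimage_algebra (space M) D borel"
    have sets_V: "sets ?V = {D -` B \<inter> space M | B. B \<in> sets borel}"
      using sets_vimage_algebra2[of D "space M" borel] D by (auto simp: measurable_def)
    have "sigma_sets (space ?V) {(\<lambda>\<omega>. h (D \<omega>)) -` A \<inter> space M | A. A \<in> sets borel} \<subseteq> sets ?V"
    proof (rule sets.sigma_sets_subset, safe)
      fix A :: "real set" assume "A \<in> sets borel"
      then have "h -` A \<in> sets borel" using measurable_sets[OF h] by auto
      moreover have "(\<lambda>\<omega>. h (D \<omega>)) -` A \<inter> space M = D -` (h -` A) \<inter> space M" by auto
      ultimately show "(\<lambda>\<omega>. h (D \<omega>)) -` A \<inter> space M \<in> sets ?V"
        unfolding sets_V by blast
    qed
    then show ?thesis using sets_V by simp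
  qed
  show ?thesis
    unfolding indep_var_eq indep_sets2_eq
  proof (intro conjI ballI)
    show "random_variable borel g" using measurable_from_subalg[OF sub g] .
    show "random_variable borel (\<lambda>\<omega>. h (D \<omega>))" using D h by measurable
    show "?\<sigma>g \<subseteq> events" using \<sigma>g sets by auto
    show "?\<sigma>hD \<subseteq> events" using \<sigma>hD D by auto
    fix a b assume a: "a \<in> ?\<sigma>g" and b: "b \<in> ?\<sigma>hD"
    obtain B where "B \<in> sets borel" "b = {\<omega>\<in>space M. D \<omega> \<in> B}"
      using b \<sigma>hD by auto
    then show "prob (a \<inter> b) = prob a * prob b"
      using ind a \<sigma>g by auto
  qed
qed

lemma normal_compensated_square_moments:
  fixes D :: "'a \<Rightarrow> real"
  assumes "prob_space M" and dist: "distributed M lborel D (normal_density 0 (sqrt v))" and "0 < v"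
  shows "integrable M (\<lambda>\<omega>. (D \<omega>)\<^sup>2 - v)" "(\<integral>\<omega>. (D \<omega>)\<^sup>2 - v \<partial>M) = 0"
    and "integrable M (\<lambda>\<omega>. ((D \<omega>)\<^sup>2 - v)\<^sup>2)" "(\<integral>\<omega>. ((D \<omega>)\<^sup>2 - v)\<^sup>2 \<partial>M) = 2 * v\<^sup>2"
proof -
  interpret prob_space M by fact
  have sd: "0 < sqrt v" using \<open>0 < v\<close> by simp
  have nonneg: "\<And>x. 0 \<le> normal_density 0 (sqrt v) x" by (simp add: normal_density_nonneg)
  have int2: "integrable M (\<lambda>\<omega>. (D \<omega>)^2)"
    using distributed_integrable[OF dist, of "\<lambda>x. x^2"] nonneg
      integrable_normal_moment[OF sd, of 0 2] by simp
  have int4: "integrable M (\<lambda>\<omega>. (D \<omega>)^4)"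
    using distributed_integrable[OF dist, of "\<lambda>x. x^4"] nonneg
      integrable_normal_moment[OF sd, of 0 4] by simp
  have "(\<integral>x. normal_density 0 (sqrt v) x * x^2 \<partial>lborel) = v"
    using integral_normal_moment_even[OF sd, of 0 1] \<open>0 < v\<close> by (simp add: fact_numeral)
  then have mom2: "(\<integral>\<omega>. (D \<omega>)^2 \<partial>M) = v"
    using distributed_integral[OF dist, of "\<lambda>x. x^2"] nonneg by simp
  have "(\<integral>x. normal_density 0 (sqrt v) x * x^4 \<partial>lborel) = 3 * v\<^sup>2"
    using integral_normal_moment_even[OF sd, of 0 2] \<open>0 < v\<close>
    by (simp add: fact_numeral power2_eq_square field_simps)
  then have mom4: "(\<integral>\<omega>. (D \<omega>)^4 \<partial>M) = 3 * v\<^sup>2"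
    using distributed_integral[OF dist, of "\<lambda>x. x^4"] nonneg by simp
  have square: "((D \<omega>)\<^sup>2 - v)\<^sup>2 = (D \<omega>)^4 - 2 * v * (D \<omega>)\<^sup>2 + v\<^sup>2" for \<omega>
    by (simp add: power2_eq_square power4_eq_xxxx algebra_simps)
  show "integrable M (\<lambda>\<omega>. (D \<omega>)\<^sup>2 - v)" "(\<integral>\<omega>. (D \<omega>)\<^sup>2 - v \<partial>M) = 0"
    using int2 mom2 prob_space by simp_all
  show "integrable M (\<lambda>\<omega>. ((D \<omega>)\<^sup>2 - v)\<^sup>2)" "(\<integral>\<omega>. ((D \<omega>)\<^sup>2 - v)\<^sup>2 \<partial>M) = 2 * v\<^sup>2"
    unfolding square using int2 int4 mom2 mom4 prob_space by (simp_all add: power2_eq_square)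
qed

lemma filtration_on_subalgebra:
  assumes "filtration_on T M F" "t \<in> T"
  shows "subalgebra M (F t)"
  using assms unfolding filtration_on_def subalgebra_def by blast

lemma filtration_on_measurable_mono:
  assumes F: "filtration_on T M F" and "s \<in> T" "t \<in> T" "s \<le> t"
    and g: "g \<in> borel_measurable (F s)"
  shows "g \<in> borel_measurable (F t)"
proof (rule measurable_from_subalg[OF _ g])
  show "subalgebra (F t) (F s)"
    using assms unfolding filtration_on_def subalgebra_def by auto
qed

lemma brownian_motion_on_prob_space: "brownian_motion_on T M F W \<Longrightarrow> prob_space M"
  unfolding brownian_motion_on_def by blast

lemma brownian_motion_on_filtration: "brownian_motion_on T M F W \<Longrightarrow> filtration_on T M F"
  unfolding brownian_motion_on_def by blast

lemma brownian_motion_on_adapted: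
  assumes BM: "brownian_motion_on T M F W" and "s \<in> T" "t \<in> T" "s \<le> t"
  shows "W s \<in> borel_measurable (F t)"
  using assms brownian_motion_on_filtration[OF BM]
  by (intro filtration_on_measurable_mono[of T M F s t]) (auto simp: brownian_motion_on_def)

lemma brownian_motion_on_measurable:
  assumes BM: "brownian_motion_on T M F W" and "t \<in> T"
  shows "W t \<in> borel_measurable M"
  using assms brownian_motion_on_adapted[OF BM, of t t]
    filtration_on_subalgebra[OF brownian_motion_on_filtration[OF BM]]
  by (auto intro: measurable_from_subalg)

lemma brownian_motion_on_indep_increment:
  fixes g :: "'a \<Rightarrow> real" and h :: "real \<Rightarrow> real"
  assumes BM: "brownian_motion_on T M F W" and ab: "a \<in> T" "b \<in> T" "a < b"
    and g: "g \<in> borel_measurable (F a)" and h: "h \<in> borel_measurable borel"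
  shows "prob_space.indep_var M borel g borel (\<lambda>\<omega>. h (W b \<omega> - W a \<omega>))"
proof -
  have sub: "subalgebra M (F a)"
    using filtration_on_subalgebra[OF brownian_motion_on_filtration[OF BM] \<open>a \<in> T\<close>] .
  have increment: "(\<lambda>\<omega>. W b \<omega> - W a \<omega>) \<in> borel_measurable M"
    using brownian_motion_on_measurable[OF BM] ab by measurable
  have indep: "\<forall>A\<in>sets (F a). \<forall>B\<in>sets borel.
      measure M (A \<inter> {\<omega>\<in>space M. W b \<omega> - W a \<omega> \<in> B})
        = measure M A * measure M {\<omega>\<in>space M. W b \<omega> - W a \<omega> \<in> B}"
    using BM ab unfolding brownian_motion_on_def by blast
  show ?thesis
    by (rule indep_var_of_indep_subalgebra[OF brownian_motion_on_prob_space[OF BM]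
          sub increment indep g h])
qed

lemma brownian_motion_on_increment_normal:
  assumes "brownian_motion_on T M F W" "a \<in> T" "b \<in> T" "a < b"
  shows "distributed M lborel (\<lambda>\<omega>. W b \<omega> - W a \<omega>) (normal_density 0 (sqrt (b - a)))"
  using assms unfolding brownian_motion_on_def by blast

lemma brownian_motion_on_compensated_increment_orthogonal:
  assumes BM: "brownian_motion_on T M F W" and ab: "a \<in> T" "b \<in> T" "a < b"
    and g: "g \<in> borel_measurable (F a)" "integrable M g"
  shows "integrable M (\<lambda>\<omega>. g \<omega> * ((W b \<omega> - W a \<omega>)\<^sup>2 - (b - a)))"
    and "(\<integral>\<omega>. g \<omega> * ((W b \<omega> - W a \<omega>)\<^sup>2 - (b - a)) \<partial>M) = 0"
proof -
  interpret prob_space M using brownian_motion_on_prob_space[OF BM] .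
  have indep: "indep_var borel g borel (\<lambda>\<omega>. (\<lambda>x. x\<^sup>2 - (b - a)) (W b \<omega> - W a \<omega>))"
    by (rule brownian_motion_on_indep_increment[OF BM ab g(1)]) measurable
  note moments = normal_compensated_square_moments[OF prob_space_axioms
      brownian_motion_on_increment_normal[OF BM ab]]
  show "integrable M (\<lambda>\<omega>. g \<omega> * ((W b \<omega> - W a \<omega>)\<^sup>2 - (b - a)))"
    "(\<integral>\<omega>. g \<omega> * ((W b \<omega> - W a \<omega>)\<^sup>2 - (b - a)) \<partial>M) = 0"
    using indep_var_integrable[OF indep g(2)] indep_var_lebesgue_integral[OF indep g(2)]
      moments(1,2) \<open>a < b\<close> by simp_all
qed

lemma brownian_motion_on_compensated_increment_square:
  assumes BM: "brownian_motion_on T M F W" and ab: "a \<in> T" "b \<in> T" "a < b"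
    and g: "g \<in> borel_measurable (F a)" "integrable M (\<lambda>\<omega>. (g \<omega>)\<^sup>2)"
  shows "integrable M (\<lambda>\<omega>. (g \<omega> * ((W b \<omega> - W a \<omega>)\<^sup>2 - (b - a)))\<^sup>2)"
    and "(\<integral>\<omega>. (g \<omega> * ((W b \<omega> - W a \<omega>)\<^sup>2 - (b - a)))\<^sup>2 \<partial>M)
           = (\<integral>\<omega>. (g \<omega>)\<^sup>2 \<partial>M) * (2 * (b - a)\<^sup>2)"
proof -
  interpret prob_space M using brownian_motion_on_prob_space[OF BM] .
  have "(\<lambda>\<omega>. (g \<omega>)\<^sup>2) \<in> borel_measurable (F a)" using g(1) by measurable
  then have indep: "indep_var borel (\<lambda>\<omega>. (g \<omega>)\<^sup>2) borel
      (\<lambda>\<omega>. (\<lambda>x. (x\<^sup>2 - (b - a))\<^sup>2) (W b \<omega> - W a \<omega>))"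
    by (rule brownian_motion_on_indep_increment[OF BM ab]) measurable
  note moments = normal_compensated_square_moments[OF prob_space_axioms
      brownian_motion_on_increment_normal[OF BM ab]]
  have square: "(g \<omega> * ((W b \<omega> - W a \<omega>)\<^sup>2 - (b - a)))\<^sup>2
      = (g \<omega>)\<^sup>2 * ((W b \<omega> - W a \<omega>)\<^sup>2 - (b - a))\<^sup>2" for \<omega>
    by (simp add: power_mult_distrib)
  show "integrable M (\<lambda>\<omega>. (g \<omega> * ((W b \<omega> - W a \<omega>)\<^sup>2 - (b - a)))\<^sup>2)"
    "(\<integral>\<omega>. (g \<omega> * ((W b \<omega> - W a \<omega>)\<^sup>2 - (b - a)))\<^sup>2 \<partial>M)
       = (\<integral>\<omega>. (g \<omega>)\<^sup>2 \<partial>M) * (2 * (b - a)\<^sup>2)"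
    unfolding square
    using indep_var_integrable[OF indep g(2)] indep_var_lebesgue_integral[OF indep g(2)]
      moments(3,4) \<open>a < b\<close> by simp_all
qed

lemma brownian_motion_on_compensated_increments_orthogonal:
  assumes BM: "brownian_motion_on T M F W"
    and T: "a \<in> T" "b \<in> T" "c \<in> T" "d \<in> T" and "a < b" "b \<le> c" "c < d"
    and g: "g \<in> borel_measurable (F a)" "integrable M (\<lambda>\<omega>. (g \<omega>)\<^sup>2)"
    and h: "h \<in> borel_measurable (F c)" "integrable M (\<lambda>\<omega>. (h \<omega>)\<^sup>2)"
  shows "(\<integral>\<omega>. (g \<omega> * ((W b \<omega> - W a \<omega>)\<^sup>2 - (b - a))) * (h \<omega> * ((W d \<omega> - W c \<omega>)\<^sup>2 - (d - c))) \<partial>M)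
    = 0"
proof -
  define Z where "Z \<omega> = g \<omega> * ((W b \<omega> - W a \<omega>)\<^sup>2 - (b - a))" for \<omega>
  have F: "filtration_on T M F" by (rule brownian_motion_on_filtration[OF BM])
  have "g \<in> borel_measurable (F c)"
    using filtration_on_measurable_mono[OF F T(1,3) _ g(1)] \<open>a < b\<close> \<open>b \<le> c\<close> by simp
  moreover have "W b \<in> borel_measurable (F c)" "W a \<in> borel_measurable (F c)"
    using brownian_motion_on_adapted[OF BM _ T(3)] T \<open>a < b\<close> \<open>b \<le> c\<close> by simp_all
  ultimately have Z_F: "Z \<in> borel_measurable (F c)"
    unfolding Z_def by measurable
  have sub: "subalgebra M (F c)" by (rule filtration_on_subalgebra[OF F T(3)])
  have "integrable M (\<lambda>\<omega>. Z \<omega> * h \<omega>)"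
  proof (rule integrable_mult_of_square_integrable)
    show "Z \<in> borel_measurable M" "h \<in> borel_measurable M"
      using measurable_from_subalg[OF sub] Z_F h(1) by blast+
    show "integrable M (\<lambda>\<omega>. (Z \<omega>)\<^sup>2)"
      unfolding Z_def
      by (rule brownian_motion_on_compensated_increment_square(1)[OF BM T(1,2) \<open>a < b\<close> g])
  qed (fact h(2))
  moreover have "(\<lambda>\<omega>. Z \<omega> * h \<omega>) \<in> borel_measurable (F c)"
    using Z_F h(1) by measurable
  ultimately have "(\<integral>\<omega>. (Z \<omega> * h \<omega>) * ((W d \<omega> - W c \<omega>)\<^sup>2 - (d - c)) \<partial>M) = 0"
    by (intro brownian_motion_on_compensated_increment_orthogonal(2)[OF BM T(3,4) \<open>c < d\<close>])
  then show ?thesis by (simp add: Z_def mult.assoc)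
qed

lemma brownian_motion_on_compensated_sum_square_bound:
  fixes s :: "nat \<Rightarrow> real" and g :: "nat \<Rightarrow> 'a \<Rightarrow> real"
  assumes BM: "brownian_motion_on T M F W"
    and s_in: "\<And>i. i \<le> N \<Longrightarrow> s i \<in> T"
    and s_mono: "\<And>i. i < N \<Longrightarrow> s i < s (Suc i)"
    and A: "A \<subseteq> {1..N}"
    and mesh: "\<And>i. i \<in> A \<Longrightarrow> s i - s (i - 1) \<le> \<delta>"
    and adapted: "\<And>i. i \<in> A \<Longrightarrow> g i \<in> borel_measurable (F (s (i - 1)))"
    and sq: "\<And>i. i \<in> A \<Longrightarrow> integrable M (\<lambda>\<omega>. (g i \<omega>)\<^sup>2)"
    and bound: "\<And>i. i \<in> A \<Longrightarrow> (\<integral>\<omega>. (g i \<omega>)\<^sup>2 \<partial>M) \<le> C"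
    and "0 \<le> C" "0 \<le> \<delta>"
  defines "Y \<equiv> \<lambda>\<omega>. \<Sum>i\<in>A. g i \<omega> * ((W (s i) \<omega> - W (s (i - 1)) \<omega>)\<^sup>2 - (s i - s (i - 1)))"
  shows "integrable M (\<lambda>\<omega>. (Y \<omega>)\<^sup>2)" and "(\<integral>\<omega>. (Y \<omega>)\<^sup>2 \<partial>M) \<le> 2 * C * \<delta> * (s N - s 0)"
proof -
  define Z where "Z i \<omega> = g i \<omega> * ((W (s i) \<omega> - W (s (i - 1)) \<omega>)\<^sup>2 - (s i - s (i - 1)))" for i \<omega>
  have F: "filtration_on T M F" by (rule brownian_motion_on_filtration[OF BM])
  have s_le: "s i \<le> s j" if "i \<le> j" "j \<le> N" for i j
    using s_mono that by (rule lift_Suc_mono_le_upto)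
  have ends: "s (i - 1) \<in> T" "s i \<in> T" "s (i - 1) < s i" if i: "i \<in> A" for i
  proof -
    obtain k where "i = Suc k" "Suc k \<le> N" using i A by (cases i) auto
    then show "s (i - 1) \<in> T" "s i \<in> T" "s (i - 1) < s i" using s_in s_mono[of k] by auto
  qed
  have finite: "finite A" using A finite_subset by blast
  have Z_meas: "Z i \<in> borel_measurable M" if "i \<in> A" for i
    using measurable_from_subalg[OF filtration_on_subalgebra[OF F ends(1)] adapted] that
      ends(1,2)[OF that] brownian_motion_on_measurable[OF BM]
    unfolding Z_def by measurable
  have Z_sq: "integrable M (\<lambda>\<omega>. (Z i \<omega>)\<^sup>2)"
    "(\<integral>\<omega>. (Z i \<omega>)\<^sup>2 \<partial>M) = (\<integral>\<omega>. (g i \<omega>)\<^sup>2 \<partial>M) * (2 * (s i - s (i - 1))\<^sup>2)" if "i \<in> A" for i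
    unfolding Z_def
    using brownian_motion_on_compensated_increment_square[OF BM ends[OF that] adapted[OF that] sq[OF that]]
    by simp_all
  have Z_orth: "(\<integral>\<omega>. Z i \<omega> * Z j \<omega> \<partial>M) = 0" if ij: "i \<in> A" "j \<in> A" "i < j" for i j
  proof -
    have "s i \<le> s (j - 1)" using ij A by (intro s_le) auto
    then show ?thesis
      unfolding Z_def using ends[OF ij(1)] ends[OF ij(2)]
      by (intro brownian_motion_on_compensated_increments_orthogonal[OF BM] adapted sq ij)
  qed
  have Y_eq: "Y = (\<lambda>\<omega>. \<Sum>i\<in>A. Z i \<omega>)" unfolding Y_def Z_def ..
  show "integrable M (\<lambda>\<omega>. (Y \<omega>)\<^sup>2)"
    unfolding Y_eq by (rule integral_square_sum_orthogonal(1)[OF finite Z_meas Z_sq(1) Z_orth])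
  have "(\<integral>\<omega>. (Y \<omega>)\<^sup>2 \<partial>M) = (\<Sum>i\<in>A. \<integral>\<omega>. (Z i \<omega>)\<^sup>2 \<partial>M)"
    unfolding Y_eq by (rule integral_square_sum_orthogonal(2)[OF finite Z_meas Z_sq(1) Z_orth])
  also have "\<dots> = (\<Sum>i\<in>A. (\<integral>\<omega>. (g i \<omega>)\<^sup>2 \<partial>M) * (2 * (s i - s (i - 1))\<^sup>2))"
    by (intro sum.cong refl Z_sq(2))
  also have "\<dots> \<le> (\<Sum>i\<in>A. 2 * C * \<delta> * (s i - s (i - 1)))"
  proof (rule sum_mono)
    fix i assume i: "i \<in> A"
    have "(\<integral>\<omega>. (g i \<omega>)\<^sup>2 \<partial>M) * (2 * (s i - s (i - 1))\<^sup>2) \<le> C * (2 * (s i - s (i - 1))\<^sup>2)"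
      using bound[OF i] by (rule mult_right_mono) simp
    also have "\<dots> \<le> C * (2 * (\<delta> * (s i - s (i - 1))))"
      using mesh[OF i] ends(3)[OF i] \<open>0 \<le> C\<close>
      by (intro mult_left_mono) (auto simp: power2_eq_square)
    finally show "(\<integral>\<omega>. (g i \<omega>)\<^sup>2 \<partial>M) * (2 * (s i - s (i - 1))\<^sup>2) \<le> 2 * C * \<delta> * (s i - s (i - 1))"
      by (simp add: algebra_simps)
  qed
  also have "\<dots> \<le> (\<Sum>i\<in>{1..N}. 2 * C * \<delta> * (s i - s (i - 1)))"
    using A \<open>0 \<le> C\<close> \<open>0 \<le> \<delta>\<close>
    by (intro sum_mono2) (auto intro!: mult_nonneg_nonneg simp: s_le)
  also have "\<dots> = 2 * C * \<delta> * (s N - s 0)"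
    by (simp add: sum_distrib_left[symmetric], induction N) (auto simp: atLeastAtMostSuc_conv)
  finally show "(\<integral>\<omega>. (Y \<omega>)\<^sup>2 \<partial>M) \<le> 2 * C * \<delta> * (s N - s 0)" .
qed

lemma le_rho_ts_if_no_gap:
  assumes T: "closed T" and ab: "a \<in> T" "b \<in> T" "a < b"
    and no_gap: "\<forall>I\<in>gap_intervals T. {a<..<b} \<inter> I = {}"
  shows "b \<le> rho_ts T b"
proof (rule ccontr)
  assume "\<not> b \<le> rho_ts T b"
  let ?S = "{x\<in>T. x < b}"
  define r where "r = Sup ?S"
  have bdd: "bdd_above ?S" by (rule bdd_aboveI[of _ b]) auto
  have "rho_ts T b = r" unfolding rho_ts_def r_def using ab by auto
  with \<open>\<not> b \<le> rho_ts T b\<close> have "r < b" by simp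
  have "a \<le> r" unfolding r_def using ab bdd by (intro cSup_upper) auto
  have "r \<in> closure ?S"
    unfolding r_def using ab bdd by (intro closure_contains_Sup) auto
  then have "r \<in> T" using T closure_minimal[of ?S T] by auto
  have "{r<..<b} \<inter> T = {}"
    using bdd cSup_upper[of _ ?S] unfolding r_def by fastforce
  then have "{r<..<b} \<in> gap_intervals T"
    unfolding gap_intervals_def using \<open>r \<in> T\<close> \<open>r < b\<close> ab by blast
  moreover have "(r + b) / 2 \<in> {a<..<b} \<inter> {r<..<b}" using \<open>a \<le> r\<close> \<open>r < b\<close> by auto
  ultimately show False using no_gap by blast
qed

lemma prog_measurable_on_adapted:
  assumes "prog_measurable_on T t1 t2 F f" and t: "t \<in> {t1..t2} \<inter> T"
  shows "f t \<in> borel_measurable (F t)"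
proof -
  have "(\<lambda>(s, \<omega>). f s \<omega>) \<in> borel_measurable (restrict_space borel ({t1..t} \<inter> T) \<Otimes>\<^sub>M F t)"
    using assms unfolding prog_measurable_on_def by blast
  moreover have "t \<in> space (restrict_space borel ({t1..t} \<inter> T))"
    using t by (simp add: space_restrict_space)
  ultimately show ?thesis using measurable_Pair2 by fastforce
qed

lemma brownian_motion_on_class_a_sum_square_bound:
  fixes s :: "nat \<Rightarrow> real" and f :: "real \<Rightarrow> 'a \<Rightarrow> real"
  assumes TS: "time_scale T" and BM: "brownian_motion_on T M F W"
    and prog: "prog_measurable_on T t1 t2 F f"
    and f_square: "\<And>t. t \<in> {t1..t2} \<inter> T \<Longrightarrow>
      integrable M (\<lambda>\<omega>. (f t \<omega>)\<^sup>2) \<and> (\<integral>\<omega>. (f t \<omega>)\<^sup>2 \<partial>M) \<le> C"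
    and "0 \<le> C" "0 \<le> \<delta>"
    and s_first: "s 0 = t1" and s_last: "s N = t2"
    and s_in: "\<And>i. i \<le> N \<Longrightarrow> s i \<in> T"
    and s_mono: "\<And>i. i < N \<Longrightarrow> s i < s (Suc i)"
    and mesh: "\<And>i. 1 \<le> i \<Longrightarrow> i \<le> N \<Longrightarrow> rho_ts T (s i) - s (i - 1) < \<delta>"
  defines "A \<equiv> {i\<in>{1..N}. \<forall>I\<in>gap_intervals T. {s (i - 1)<..<s i} \<inter> I = {}}"
  defines "Y \<equiv> \<lambda>\<omega>. \<Sum>i\<in>A. f (s (i - 1)) \<omega> * ((W (s i) \<omega> - W (s (i - 1)) \<omega>)\<^sup>2 - (s i - s (i - 1)))"
  shows "integrable M (\<lambda>\<omega>. (Y \<omega>)\<^sup>2)" and "(\<integral>\<omega>. (Y \<omega>)\<^sup>2 \<partial>M) \<le> 2 * C * \<delta> * (t2 - t1)"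
proof -
  have left_end: "s (i - 1) \<in> {t1..t2} \<inter> T" if "i \<in> A" for i
    using that s_in s_first s_last lift_Suc_mono_le_upto[of N s 0 "i - 1"]
      lift_Suc_mono_le_upto[of N s "i - 1" N]
    by (auto simp: A_def s_mono)
  have fine: "s i - s (i - 1) \<le> \<delta>" if i: "i \<in> A" for i
  proof -
    have range: "1 \<le> i" "i \<le> N"
      and no_gap: "\<forall>I\<in>gap_intervals T. {s (i - 1)<..<s i} \<inter> I = {}"
      using i unfolding A_def by auto
    have "closed T" using TS unfolding time_scale_def by simp
    moreover have "s (i - 1) < s i" using s_mono[of "i - 1"] range by simp
    ultimately have "s i \<le> rho_ts T (s i)"
      using s_in range no_gap by (intro le_rho_ts_if_no_gap) auto
    then show ?thesis using mesh[OF range] by simp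
  qed
  have "A \<subseteq> {1..N}" unfolding A_def by auto
  moreover have "f (s (i - 1)) \<in> borel_measurable (F (s (i - 1)))"
    "integrable M (\<lambda>\<omega>. (f (s (i - 1)) \<omega>)\<^sup>2)" "(\<integral>\<omega>. (f (s (i - 1)) \<omega>)\<^sup>2 \<partial>M) \<le> C"
    if "i \<in> A" for i
    using prog_measurable_on_adapted[OF prog left_end[OF that]] f_square[OF left_end[OF that]]
    by auto
  ultimately show "integrable M (\<lambda>\<omega>. (Y \<omega>)\<^sup>2)" "(\<integral>\<omega>. (Y \<omega>)\<^sup>2 \<partial>M) \<le> 2 * C * \<delta> * (t2 - t1)"
    using brownian_motion_on_compensated_sum_square_bound[where N=N and s=s and A=A and \<delta>=\<delta>
        and g="\<lambda>i. f (s (i - 1))" and C=C, OF BM s_in s_mono _ fine]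
      \<open>0 \<le> C\<close> \<open>0 \<le> \<delta>\<close> s_first s_last
    unfolding Y_def by simp_all
qed

theorem lemma2:
  fixes T :: "real set" and t1 t2 :: real
    and M :: "'a measure" and F :: "real \<Rightarrow> 'a measure"
    and W :: "real \<Rightarrow> 'a \<Rightarrow> real" and f :: "real \<Rightarrow> 'a \<Rightarrow> real"
    and N :: "nat \<Rightarrow> nat" and s :: "nat \<Rightarrow> nat \<Rightarrow> real"
  assumes TS: "time_scale T"
    and t12: "t1 \<in> T" "t2 \<in> T" "t1 < t2"
    and P: "prob_space M"
    and BM: "brownian_motion_on T M F W"
    and prog: "prog_measurable_on T t1 t2 F f"
    and bdd: "\<exists>C. \<forall>t\<in>{t1..t2} \<inter> T.
                 integrable M (\<lambda>\<omega>. (f t \<omega>)\<^sup>2) \<and> (\<integral>\<omega>. (f t \<omega>)\<^sup>2 \<partial>M) \<le> C"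
    and part_start: "\<And>n. s n 0 = t1"
    and part_end: "\<And>n. s n (N n) = t2"
    and part_in: "\<And>n i. i \<le> N n \<Longrightarrow> s n i \<in> T"
    and part_mono: "\<And>n i. i < N n \<Longrightarrow> s n i < s n (Suc i)"
    and mesh: "\<And>n i. 1 \<le> i \<Longrightarrow> i \<le> N n \<Longrightarrow> rho_ts T (s n i) - s n (i - 1) < (1/2) ^ n"
  shows "AE \<omega> in M.
           (\<lambda>n. (\<Sum>i\<in>{i\<in>{1..N n}. \<forall>I\<in>gap_intervals T. {s n (i - 1)<..<s n i} \<inter> I = {}}.
                    f (s n (i - 1)) \<omega> * (W (s n i) \<omega> - W (s n (i - 1)) \<omega>)\<^sup>2)
               - (\<Sum>i\<in>{i\<in>{1..N n}. \<forall>I\<in>gap_intervals T. {s n (i - 1)<..<s n i} \<inter> I = {}}.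
                    f (s n (i - 1)) \<omega> * (s n i - s n (i - 1))))
           \<longlonglongrightarrow> 0"
proof -
  obtain C where C: "\<And>t. t \<in> {t1..t2} \<inter> T \<Longrightarrow>
      integrable M (\<lambda>\<omega>. (f t \<omega>)\<^sup>2) \<and> (\<integral>\<omega>. (f t \<omega>)\<^sup>2 \<partial>M) \<le> C"
    using bdd by blast
  have "(\<integral>\<omega>. (f t1 \<omega>)\<^sup>2 \<partial>M) \<le> C" using C t12 by auto
  moreover have "0 \<le> (\<integral>\<omega>. (f t1 \<omega>)\<^sup>2 \<partial>M)" by (rule integral_nonneg_AE) simp
  ultimately have "0 \<le> C" by linarith
  define Y where "Y n \<omega> = (\<Sum>i\<in>{i\<in>{1..N n}. \<forall>I\<in>gap_intervals T. {s n (i - 1)<..<s n i} \<inter> I = {}}.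
      f (s n (i - 1)) \<omega> * ((W (s n i) \<omega> - W (s n (i - 1)) \<omega>)\<^sup>2 - (s n i - s n (i - 1))))" for n \<omega>
  have Y_square: "integrable M (\<lambda>\<omega>. (Y n \<omega>)\<^sup>2)"
    "(\<integral>\<omega>. (Y n \<omega>)\<^sup>2 \<partial>M) \<le> 2 * C * (1/2)^n * (t2 - t1)" for n
    using brownian_motion_on_class_a_sum_square_bound[OF TS BM prog C \<open>0 \<le> C\<close> _
        part_start part_end part_in part_mono mesh]
    unfolding Y_def by simp_all
  have "summable (\<lambda>n. \<integral>\<omega>. (Y n \<omega>)\<^sup>2 \<partial>M)"
  proof (rule summable_comparison_test')
    show "summable (\<lambda>n. 2 * C * (1/2::real)^n * (t2 - t1))"
      by (intro summable_mult2 summable_mult summable_geometric) simp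
    show "norm (\<integral>\<omega>. (Y n \<omega>)\<^sup>2 \<partial>M) \<le> 2 * C * (1/2)^n * (t2 - t1)" for n
      using Y_square(2)[of n] integral_nonneg_AE[of "\<lambda>\<omega>. (Y n \<omega>)\<^sup>2" M] by simp
  qed
  then have "AE \<omega> in M. (\<lambda>n. Y n \<omega>) \<longlonglongrightarrow> 0"
    using Y_square(1) by (rule AE_tendsto_zero_of_summable_square_integrals[rotated])
  then show ?thesis
    unfolding Y_def by (simp add: sum_subtractf right_diff_distrib)
qed

end
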